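(* Consider the model $y_{it}=x_{it}'\theta^0_{k_i^0}+\varepsilon_{it}$ described in the context and suppose Assumptions 1 and 2 (stated in the context) hold. Then for $\eta>0$ small enough and for all $\delta>0$, $$\sup_{\boldsymbol\theta\in\mathcal N_\eta}\frac1N\sum_{i=1}^N1\{\widehat k_i^{(K^0)}(\boldsymbol\theta)\neq k_i^0\}=o_p(T^{-\delta})$$ as $N,T\to\infty$.
   Context: Model: $y_{it}=x_{it}'\theta^0_{k_i^0}+\varepsilon_{it}$, $i\le N$, $t\le T$, random $x_{it}\in\mathbb{R}^p$, random $\varepsilon_{it}$, nonrandom $k_i^0\in[K^0]$, $\theta^0_k\in\Theta$, $G_k^0=\{i:k_i^0=k\}$, $N_k^0=|G_k^0|$. For $\boldsymbol\theta=(\theta_1,\dots,\theta_{K^0})$, $\widehat k_i^{(K^0)}(\boldsymbol\theta)=\arg\min_{k\in[K^0]}\sum_t(y_{it}-x_{it}'\theta_k)^2$. For $\eta>0$, $\mathcal N_\eta=\{\boldsymbol\theta\in\Theta^{K^0}:\|\theta_k-\theta_k^0\|^2<\eta\ \forall k\in[K^0]\}$. Assumption 1: $K^0$ fixed; $N_k^0=\tau_kN^{\alpha_k}$, $\tau_k$ bounded away from $0,\infty$, $\alpha_k\in[0,1]$, $N_k^0\ge1$, $\sum_kN_k^0=N$, $1=\alpha_1=\dots=\alpha_m>\alpha_{m+1}\ge\dots\ge\alpha_{K^0}\ge0$ for some $m\in[K^0-1]$. Assumption 2: constants $M,c>0$ with (a) $\Theta$ compact; (b) $E\|x_{it}\|^4\le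 M$; (c) $E\varepsilon_{it}=0$, $E\varepsilon_{it}^4\le M$; (d) $(NT)^{-1/2}\sum_{i,t}x_{it}\varepsilon_{it}=O_p(1)$; (e) with $\rho_{NT}(\boldsymbol\gamma_N,k,\tilde k)$ the minimum eigenvalue of $(N_k^0)^{-1}\sum_i1\{k_i^0=k\}1\{k_i=\tilde k\}T^{-1}\sum_tx_{it}x_{it}'$, some $\widehat\rho_{NT}\xrightarrow{p}\rho>0$ satisfies $\min_{\boldsymbol\gamma_N\in[K^0]^N}\max_{\tilde k}\rho_{NT}(\boldsymbol\gamma_N,k,\tilde k)\ge\widehat\rho_{NT}$ for all $k$, large $T$; (f) $\lambda_{\min}(T^{-1}\sum_tx_{it}x_{it}')\ge\widehat c_T$ for all $i$, large $T$, $\lim\widehat c_T>c$; (g) if $\alpha_{K^0}\ge1/2$, $N/T^\nu\to0$ for some $\nu>0$; if $\alpha_{K^0}<1/2$, $N^{1-2\alpha_{K^0}}/T\to0$; (h) $\|\theta^0_k-\theta^0_{\tilde k}\|>c$ for $k\ne\tilde k$; (i) $\sup_iP(T^{-1}\sum_t\|x_{it}\|^2\ge M)=o(T^{-\delta})$ for all $\delta>0$; (j) for each $\epsilon>0$, $\sup_iP(\|T^{-1}\sum_tx_{it}\varepsilon_{it}\|\ge\epsilon)=o(T^{-\delta})$ for all $\delta>0$; (k) $(NT)^{-1}\sum_{i,t}\varepsilon^2_{it}\xrightarrow{p}\sigma^2>0$. *)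

theory Defs
  imports "HOL-Probability.Probability"
begin

definition min_eig :: "real^'p^'p \<Rightarrow> real" where
  "min_eig A = Min {l. \<exists>v::real^'p. v \<noteq> 0 \<and> A *v v = l *\<^sub>R v}"

definition outer :: "real^'p \<Rightarrow> real^'p^'p" where
  "outer v = (\<chi> i j. v $ i * v $ j)"

definition outer_prob :: "'w measure \<Rightarrow> 'w set \<Rightarrow> real" where
  "outer_prob M A = Inf (measure M ` {B \<in> sets M. A \<subseteq> B})"

definition little_o_seq :: "(nat \<Rightarrow> real) \<Rightarrow> (nat \<Rightarrow> real) \<Rightarrow> bool" where
  "little_o_seq f r \<longleftrightarrow> (\<lambda>n. f n / r n) \<longlonglongrightarrow> 0"

definition little_op :: "'w measure \<Rightarrow> (nat \<Rightarrow> 'w \<Rightarrow> real) \<Rightarrow> (nat \<Rightarrow> real) \<Rightarrow> bool" where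
  "little_op M Z r \<longleftrightarrow> (\<forall>e>0. (\<lambda>n. outer_prob M {\<omega>\<in>space M. \<bar>Z n \<omega>\<bar> > e * r n}) \<longlonglongrightarrow> 0)"

definition bounded_in_prob :: "'w measure \<Rightarrow> (nat \<Rightarrow> 'w \<Rightarrow> 'b::real_normed_vector) \<Rightarrow> bool" where
  "bounded_in_prob M Z \<longleftrightarrow> (\<forall>e>0. \<exists>B. eventually (\<lambda>n. measure M {\<omega>\<in>space M. norm (Z n \<omega>) > B} < e) sequentially)"

definition conv_in_prob :: "'w measure \<Rightarrow> (nat \<Rightarrow> 'w \<Rightarrow> real) \<Rightarrow> real \<Rightarrow> bool" where
  "conv_in_prob M Z c \<longleftrightarrow> (\<forall>e>0. (\<lambda>n. measure M {\<omega>\<in>space M. \<bar>Z n \<omega> - c\<bar> > e}) \<longlonglongrightarrow> 0)"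

definition ymod :: "(nat \<Rightarrow> nat \<Rightarrow> nat \<Rightarrow> 'w \<Rightarrow> real^'p) \<Rightarrow> (nat \<Rightarrow> nat \<Rightarrow> nat \<Rightarrow> 'w \<Rightarrow> real)
    \<Rightarrow> (nat \<Rightarrow> real^'p) \<Rightarrow> (nat \<Rightarrow> nat \<Rightarrow> nat) \<Rightarrow> nat \<Rightarrow> nat \<Rightarrow> nat \<Rightarrow> 'w \<Rightarrow> real" where
  "ymod x eps theta0 k0 n i t \<omega> = x n i t \<omega> \<bullet> theta0 (k0 n i) + eps n i t \<omega>"

definition Qcrit :: "(nat \<Rightarrow> nat \<Rightarrow> nat \<Rightarrow> 'w \<Rightarrow> real^'p) \<Rightarrow> (nat \<Rightarrow> nat \<Rightarrow> nat \<Rightarrow> 'w \<Rightarrow> real)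
    \<Rightarrow> (nat \<Rightarrow> real^'p) \<Rightarrow> (nat \<Rightarrow> nat \<Rightarrow> nat) \<Rightarrow> (nat \<Rightarrow> nat)
    \<Rightarrow> nat \<Rightarrow> (nat \<Rightarrow> real^'p) \<Rightarrow> nat \<Rightarrow> nat \<Rightarrow> 'w \<Rightarrow> real" where
  "Qcrit x eps theta0 k0 T n theta i k \<omega> =
     (\<Sum>t=1..T n. (ymod x eps theta0 k0 n i t \<omega> - x n i t \<omega> \<bullet> theta k)\<^sup>2)"

definition rhoNT :: "(nat \<Rightarrow> nat \<Rightarrow> nat \<Rightarrow> 'w \<Rightarrow> real^'p) \<Rightarrow> (nat \<Rightarrow> nat \<Rightarrow> nat) \<Rightarrow> (nat \<Rightarrow> nat)
    \<Rightarrow> (nat \<Rightarrow> nat) \<Rightarrow> nat \<Rightarrow> (nat \<Rightarrow> nat) \<Rightarrow> nat \<Rightarrow> nat \<Rightarrow> 'w \<Rightarrow> real" where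
  "rhoNT x k0 N T n \<gamma> k kt \<omega> =
     min_eig ((1 / real (card {i\<in>{1..N n}. k0 n i = k})) *\<^sub>R
       (\<Sum>i\<in>{1..N n}. (if k0 n i = k \<and> \<gamma> i = kt then 1 else 0) *\<^sub>R
          ((1 / real (T n)) *\<^sub>R (\<Sum>t=1..T n. outer (x n i t \<omega>)))))"

end

theory Submission
  imports Defs
begin

text \<open>Call individual i regular on a sample path if the Gram matrix of its regressors has
  smallest eigenvalue at least c, the mean squared norm of its regressors is below Mb, and its
  score T^-1 \<Sigma>t \<epsilon>it xit has norm below a small e0. If i belongs to group k and \<theta> lies in N\<eta>,
  the least-squares criterion of a regular i is strictly smaller at \<theta>k than at any \<theta>k' with
  k' \<noteq> k: the fit term is at least c (c/2)^2 by the separation of the true values and dominates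
  both the drift term \<eta> Mb and the cross term with the score. Hence, uniformly over N\<eta>, the
  misclassified fraction is at most the fraction of irregular individuals, whose expectation is
  o(T^-\<delta>) by Assumption 2(i),(j), and Markov's inequality gives the o_p bound.\<close>

abbreviation sample_gram :: "(nat \<Rightarrow> real^'p) \<Rightarrow> nat \<Rightarrow> real^'p^'p" where
  "sample_gram x T \<equiv> (1 / real T) *\<^sub>R (\<Sum>t=1..T. outer (x t))"

lemma inner_outer_mult: "u \<bullet> (outer v *v w) = (v \<bullet> u) * (v \<bullet> w)"
  unfolding outer_def matrix_vector_mult_def inner_vec_def
  by (simp add: sum_distrib_left sum_distrib_right, subst sum.swap) (simp add: ac_simps)

lemma transpose_outer: "transpose (outer v) = outer v"
  by (simp add: transpose_def outer_def vec_eq_iff mult.commute)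

lemma transpose_sum: "transpose (\<Sum>i\<in>S. A i) = (\<Sum>i\<in>S. transpose (A i :: 'a::comm_monoid_add^'n^'m))"
  by (induction S rule: infinite_finite_induct) (auto simp: transpose_def vec_eq_iff)

lemma matrix_vector_mult_sum: "(\<Sum>i\<in>S. A i) *v w = (\<Sum>i\<in>S. A i *v (w :: real^'n))"
  by (induction S rule: infinite_finite_induct) (auto simp: matrix_vector_mult_add_rdistrib)

lemma transpose_sample_gram: "transpose (sample_gram x T) = sample_gram x T"
  by (simp add: transpose_scalar transpose_sum transpose_outer)

lemma inner_sample_gram:
  "u \<bullet> (sample_gram x T *v w) = (1 / real T) * (\<Sum>t=1..T. (x t \<bullet> u) * (x t \<bullet> w))"
  by (simp add: scaleR_matrix_vector_assoc[symmetric] matrix_vector_mult_sum inner_sum_right inner_outer_mult)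

lemma inner_matrix_vector_mult_commute:
  fixes A :: "real^'n^'n"
  assumes "transpose A = A"
  shows "u \<bullet> (A *v w) = w \<bullet> (A *v u)"
  by (metis assms dot_lmul_matrix inner_commute vector_transpose_matrix)

lemma finite_eigenvalues_symmetric:
  fixes A :: "real^'n^'n"
  assumes "transpose A = A"
  shows "finite {l. \<exists>v. v \<noteq> 0 \<and> A *v v = l *\<^sub>R v}"
proof -
  define S where "S = {l. \<exists>v. v \<noteq> 0 \<and> A *v v = l *\<^sub>R v}"
  define ev where "ev l = (SOME v. v \<noteq> 0 \<and> A *v v = l *\<^sub>R v)" for l
  have ev: "ev l \<noteq> 0 \<and> A *v ev l = l *\<^sub>R ev l" if "l \<in> S" for l
    using that someI_ex[of "\<lambda>v. v \<noteq> 0 \<and> A *v v = l *\<^sub>R v"] unfolding S_def ev_def by simp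
  have "inj_on ev S"
    by (rule inj_onI) (metis ev scaleR_cancel_right)
  moreover have "pairwise orthogonal (ev ` S)"
  proof (clarsimp simp: pairwise_def)
    fix l l' assume l: "l \<in> S" and l': "l' \<in> S" and "ev l \<noteq> ev l'"
    then have "l \<noteq> l'" by auto
    have "l * (ev l' \<bullet> ev l) = l' * (ev l \<bullet> ev l')"
      using inner_matrix_vector_mult_commute[OF assms, of "ev l'" "ev l"] ev[OF l] ev[OF l'] by simp
    with \<open>l \<noteq> l'\<close> show "orthogonal (ev l) (ev l')" by (simp add: orthogonal_def inner_commute)
  qed
  moreover have "0 \<notin> ev ` S" using ev by force
  ultimately show ?thesis
    unfolding S_def[symmetric]
    by (metis finite_imageD independent_imp_finite pairwise_orthogonal_independent)
qed

lemma linear_coeff_nonpos_if_quadratic_nonneg: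
  fixes a b :: real
  assumes "\<And>t. 0 \<le> t\<^sup>2 * b - 2 * t * a"
  shows "a \<le> 0"
proof (rule ccontr)
  assume "\<not> a \<le> 0"
  define t where "t = a / (\<bar>b\<bar> + 1)"
  have "t * (\<bar>b\<bar> + 1) = a" by (simp add: t_def)
  then have t: "0 < t" "t * \<bar>b\<bar> + t = a"
    using \<open>\<not> a \<le> 0\<close> by (simp_all add: t_def distrib_left)
  have "t * b \<le> t * \<bar>b\<bar>" using t(1) by (simp add: mult_left_mono)
  then have "t * b - 2 * a < 0" using t \<open>\<not> a \<le> 0\<close> by linarith
  then have "t * (t * b - 2 * a) < 0" using t(1) by (simp add: mult_pos_neg)
  with assms[of t] show False by (simp add: power2_eq_square algebra_simps)
qed

text \<open>Perturbing v along the residual A v - \<mu> v would decrease the form to first order.\<close>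
lemma rayleigh_minimizer_eigenvector:
  fixes A :: "real^'n^'n"
  assumes sym: "transpose A = A"
    and ge: "\<And>w. \<mu> * (norm w)\<^sup>2 \<le> w \<bullet> (A *v w)"
    and eq: "v \<bullet> (A *v v) = \<mu> * (norm v)\<^sup>2"
  shows "A *v v = \<mu> *\<^sub>R v"
proof -
  define q where "q w = w \<bullet> (A *v w) - \<mu> * (w \<bullet> w)" for w
  define u where "u = A *v v - \<mu> *\<^sub>R v"
  have expand: "q (v - t *\<^sub>R u) = q v - 2 * t * (u \<bullet> u) + t\<^sup>2 * q u" for t
    using inner_matrix_vector_mult_commute[OF sym, of v u] inner_commute[of v "A *v v"]
    by (simp add: q_def u_def algebra_simps inner_diff_left inner_diff_right power2_eq_square)
  have "q v = 0" and q_nonneg: "\<And>w. 0 \<le> q w"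
    using eq ge by (simp_all add: q_def power2_norm_eq_inner)
  then have "0 \<le> t\<^sup>2 * q u - 2 * t * (u \<bullet> u)" for t
    using expand[of t] q_nonneg[of "v - t *\<^sub>R u"] by linarith
  then have "u \<bullet> u \<le> 0" by (rule linear_coeff_nonpos_if_quadratic_nonneg)
  then have "u = 0" using inner_gt_zero_iff[of u] by linarith
  then show ?thesis by (simp add: u_def)
qed

lemma min_eig_le_quadratic_form:
  fixes A :: "real^'n^'n"
  assumes sym: "transpose A = A"
  shows "min_eig A * (norm v)\<^sup>2 \<le> v \<bullet> (A *v v)"
proof -
  define q where "q w = w \<bullet> (A *v w)" for w :: "real^'n"
  have "continuous_on (sphere 0 1) q"
    unfolding q_def by (intro continuous_intros linear_continuous_on matrix_vector_mul_linear)
  then have "\<exists>v0\<in>sphere 0 1. \<forall>w\<in>sphere 0 1. q v0 \<le> q w"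
    by (intro continuous_attains_inf compact_sphere) simp
  then obtain v0 where v0: "v0 \<in> sphere 0 1" and min: "\<And>w. w \<in> sphere 0 1 \<Longrightarrow> q v0 \<le> q w"
    by blast
  have ge: "q v0 * (norm w)\<^sup>2 \<le> q w" for w
  proof (cases "w = 0")
    case False
    then have "q v0 \<le> q ((1 / norm w) *\<^sub>R w)" by (intro min) simp
    then show ?thesis
      using False by (simp add: q_def matrix_vector_mult_scaleR power2_eq_square field_simps)
  qed (simp add: q_def)
  have "A *v v0 = q v0 *\<^sub>R v0"
    using v0 ge[unfolded q_def] by (intro rayleigh_minimizer_eigenvector[OF sym]) (auto simp: q_def)
  then have "min_eig A \<le> q v0"
    unfolding min_eig_def using v0 finite_eigenvalues_symmetric[OF sym]
    by (intro Min_le) (auto intro!: exI[of _ v0])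
  then have "min_eig A * (norm v)\<^sup>2 \<le> q v0 * (norm v)\<^sup>2" by (simp add: mult_right_mono)
  also have "\<dots> \<le> q v" by (rule ge)
  finally show ?thesis unfolding q_def .
qed

lemma sum_sq_resid_diff_ge:
  fixes x :: "nat \<Rightarrow> real^'p" and e :: "nat \<Rightarrow> real" and \<beta> \<gamma> \<gamma>' :: "real^'p"
  shows "min_eig (sample_gram x T) * (norm (\<beta> - \<gamma>'))\<^sup>2
      - (norm (\<gamma> - \<beta>))\<^sup>2 * ((1 / real T) * (\<Sum>t=1..T. (norm (x t))\<^sup>2))
      - 2 * norm ((1 / real T) *\<^sub>R (\<Sum>t=1..T. e t *\<^sub>R x t)) * norm (\<gamma> - \<gamma>')
    \<le> (1 / real T) * ((\<Sum>t=1..T. (x t \<bullet> \<beta> + e t - x t \<bullet> \<gamma>')\<^sup>2)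
                     - (\<Sum>t=1..T. (x t \<bullet> \<beta> + e t - x t \<bullet> \<gamma>)\<^sup>2))"
proof -
  define a where "a = \<beta> - \<gamma>'"
  define d where "d = \<gamma> - \<beta>"
  define g where "g = (1 / real T) *\<^sub>R (\<Sum>t=1..T. e t *\<^sub>R x t)"
  have "(x t \<bullet> \<beta> + e t - x t \<bullet> \<gamma>')\<^sup>2 - (x t \<bullet> \<beta> + e t - x t \<bullet> \<gamma>)\<^sup>2
      = (x t \<bullet> a) * (x t \<bullet> a) - (x t \<bullet> d)\<^sup>2 + 2 * (e t * (x t \<bullet> (a + d)))" for t
    by (simp add: a_def d_def inner_diff_right power2_eq_square algebra_simps)
  then have "(\<Sum>t=1..T. (x t \<bullet> \<beta> + e t - x t \<bullet> \<gamma>')\<^sup>2) - (\<Sum>t=1..T. (x t \<bullet> \<beta> + e t - x t \<bullet> \<gamma>)\<^sup>2)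
      = (\<Sum>t=1..T. (x t \<bullet> a) * (x t \<bullet> a)) - (\<Sum>t=1..T. (x t \<bullet> d)\<^sup>2)
        + 2 * (\<Sum>t=1..T. e t * (x t \<bullet> (a + d)))"
    by (simp add: sum_subtractf[symmetric] sum.distrib[symmetric] sum_distrib_left)
  moreover have "(1 / real T) * (\<Sum>t=1..T. (x t \<bullet> a) * (x t \<bullet> a)) = a \<bullet> (sample_gram x T *v a)"
    by (simp only: inner_sample_gram)
  moreover have "(1 / real T) * (\<Sum>t=1..T. e t * (x t \<bullet> (a + d))) = g \<bullet> (a + d)"
    by (simp add: g_def inner_sum_left sum_distrib_left)
  ultimately have diff: "(1 / real T) * ((\<Sum>t=1..T. (x t \<bullet> \<beta> + e t - x t \<bullet> \<gamma>')\<^sup>2)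
                     - (\<Sum>t=1..T. (x t \<bullet> \<beta> + e t - x t \<bullet> \<gamma>)\<^sup>2))
      = a \<bullet> (sample_gram x T *v a) - (1 / real T) * (\<Sum>t=1..T. (x t \<bullet> d)\<^sup>2) + 2 * (g \<bullet> (a + d))"
    by (simp add: right_diff_distrib distrib_left)
  have "min_eig (sample_gram x T) * (norm a)\<^sup>2 \<le> a \<bullet> (sample_gram x T *v a)"
    by (rule min_eig_le_quadratic_form[OF transpose_sample_gram])
  moreover have "(1 / real T) * (\<Sum>t=1..T. (x t \<bullet> d)\<^sup>2)
      \<le> (norm d)\<^sup>2 * ((1 / real T) * (\<Sum>t=1..T. (norm (x t))\<^sup>2))"
  proof -
    have "(x t \<bullet> d)\<^sup>2 \<le> (norm d)\<^sup>2 * (norm (x t))\<^sup>2" for t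
      using Cauchy_Schwarz_ineq[of "x t" d] by (simp add: power2_norm_eq_inner mult.commute)
    then have "(\<Sum>t=1..T. (x t \<bullet> d)\<^sup>2) \<le> (norm d)\<^sup>2 * (\<Sum>t=1..T. (norm (x t))\<^sup>2)"
      by (simp add: sum_distrib_left sum_mono)
    then show ?thesis by (simp add: divide_right_mono)
  qed
  moreover have "- (norm g * norm (a + d)) \<le> g \<bullet> (a + d)"
    using Cauchy_Schwarz_ineq2[of g "a + d"] by linarith
  moreover have "a + d = \<gamma> - \<gamma>'" by (simp add: a_def d_def)
  ultimately show ?thesis unfolding diff by (simp add: a_def d_def g_def)
qed

lemma sum_sq_resid_less:
  fixes x :: "nat \<Rightarrow> real^'p" and e :: "nat \<Rightarrow> real" and \<beta> \<beta>' \<gamma> \<gamma>' :: "real^'p"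
  assumes "0 < T" "0 < c" "c \<le> min_eig (sample_gram x T)"
    and "c < norm (\<beta> - \<beta>')"
    and "(norm (\<gamma> - \<beta>))\<^sup>2 < \<eta>" "(norm (\<gamma>' - \<beta>'))\<^sup>2 < \<eta>" "\<eta> \<le> c\<^sup>2 / 4" "\<eta> * Mb \<le> c ^ 3 / 8"
    and "norm \<gamma> \<le> R" "norm \<gamma>' \<le> R" "4 * R * \<epsilon> \<le> c ^ 3 / 8"
    and "(1 / real T) * (\<Sum>t=1..T. (norm (x t))\<^sup>2) < Mb"
    and "norm ((1 / real T) *\<^sub>R (\<Sum>t=1..T. e t *\<^sub>R x t)) < \<epsilon>"
  shows "(\<Sum>t=1..T. (x t \<bullet> \<beta> + e t - x t \<bullet> \<gamma>)\<^sup>2) < (\<Sum>t=1..T. (x t \<bullet> \<beta> + e t - x t \<bullet> \<gamma>')\<^sup>2)"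
proof -
  define S where "S = (1 / real T) * (\<Sum>t=1..T. (norm (x t))\<^sup>2)"
  define g where "g = (1 / real T) *\<^sub>R (\<Sum>t=1..T. e t *\<^sub>R x t)"
  have "(c / 2)\<^sup>2 = c\<^sup>2 / 4" by (simp add: power_divide)
  then have "(norm (\<gamma>' - \<beta>'))\<^sup>2 < (c / 2)\<^sup>2" using assms(6,7) by linarith
  then have "norm (\<gamma>' - \<beta>') < c / 2"
    by (rule power_less_imp_less_base) (use assms(2) in simp)
  then have "c / 2 < norm (\<beta> - \<gamma>')"
    using assms(4) norm_triangle_ineq[of "\<beta> - \<gamma>'" "\<gamma>' - \<beta>'"] by simp
  then have "c * (c / 2)\<^sup>2 < c * (norm (\<beta> - \<gamma>'))\<^sup>2"
    using assms(2) by (intro mult_strict_left_mono power_strict_mono) auto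
  also have "\<dots> \<le> min_eig (sample_gram x T) * (norm (\<beta> - \<gamma>'))\<^sup>2"
    using assms(3) by (simp add: mult_right_mono)
  finally have fit: "c ^ 3 / 4 < min_eig (sample_gram x T) * (norm (\<beta> - \<gamma>'))\<^sup>2"
    by (simp add: power2_eq_square power3_eq_cube)
  have "0 \<le> \<eta>" using assms(5) zero_le_power2[of "norm (\<gamma> - \<beta>)"] by linarith
  then have "(norm (\<gamma> - \<beta>))\<^sup>2 * S \<le> \<eta> * Mb"
    using assms(5,12) by (intro mult_mono) (auto simp: S_def intro!: sum_nonneg divide_nonneg_nonneg)
  then have drift: "(norm (\<gamma> - \<beta>))\<^sup>2 * S \<le> c ^ 3 / 8" using assms(8) by linarith
  have "norm (\<gamma> - \<gamma>') \<le> 2 * R"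
    using assms(9,10) norm_triangle_ineq4[of \<gamma> \<gamma>'] by linarith
  moreover have "norm g < \<epsilon>" unfolding g_def by (rule assms(13))
  moreover have "0 \<le> \<epsilon>" using calculation(2) norm_ge_zero[of g] by linarith
  ultimately have "2 * norm g * norm (\<gamma> - \<gamma>') \<le> 2 * \<epsilon> * (2 * R)"
    by (intro mult_mono) auto
  also have "\<dots> = 4 * R * \<epsilon>" by simp
  also have "\<dots> \<le> c ^ 3 / 8" by (rule assms(11))
  finally have noise: "2 * norm g * norm (\<gamma> - \<gamma>') \<le> c ^ 3 / 8" .
  have "0 < (1 / real T) * ((\<Sum>t=1..T. (x t \<bullet> \<beta> + e t - x t \<bullet> \<gamma>')\<^sup>2)
                     - (\<Sum>t=1..T. (x t \<bullet> \<beta> + e t - x t \<bullet> \<gamma>)\<^sup>2))"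
    using sum_sq_resid_diff_ge[where x = x and T = T and \<beta> = \<beta> and \<gamma> = \<gamma> and \<gamma>' = \<gamma>' and e = e]
      fit drift noise
    unfolding S_def g_def by linarith
  then show ?thesis using assms(1) by (simp add: zero_less_divide_iff)
qed

lemma least_squares_group_eq_true_group:
  fixes x :: "nat \<Rightarrow> real^'p" and e :: "nat \<Rightarrow> real" and \<beta> \<theta> :: "nat \<Rightarrow> real^'p"
  assumes "0 < T" "0 < c" "c \<le> min_eig (sample_gram x T)"
    and "\<forall>k\<in>K. \<forall>k'\<in>K. k \<noteq> k' \<longrightarrow> c < norm (\<beta> k - \<beta> k')"
    and "\<forall>k\<in>K. (norm (\<theta> k - \<beta> k))\<^sup>2 < \<eta> \<and> norm (\<theta> k) \<le> R"
    and "\<eta> \<le> c\<^sup>2 / 4" "\<eta> * Mb \<le> c ^ 3 / 8" "4 * R * \<epsilon> \<le> c ^ 3 / 8"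
    and "(1 / real T) * (\<Sum>t=1..T. (norm (x t))\<^sup>2) < Mb"
    and "norm ((1 / real T) *\<^sub>R (\<Sum>t=1..T. e t *\<^sub>R x t)) < \<epsilon>"
    and "k \<in> K" "k' \<in> K"
    and argmin: "(\<Sum>t=1..T. (x t \<bullet> \<beta> k + e t - x t \<bullet> \<theta> k')\<^sup>2) \<le> (\<Sum>t=1..T. (x t \<bullet> \<beta> k + e t - x t \<bullet> \<theta> k)\<^sup>2)"
  shows "k' = k"
proof (rule ccontr)
  assume "k' \<noteq> k"
  then have "(\<Sum>t=1..T. (x t \<bullet> \<beta> k + e t - x t \<bullet> \<theta> k)\<^sup>2) < (\<Sum>t=1..T. (x t \<bullet> \<beta> k + e t - x t \<bullet> \<theta> k')\<^sup>2)"
    using assms by (intro sum_sq_resid_less[where \<beta>' = "\<beta> k'" and c = c and \<eta> = \<eta> and Mb = Mb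
        and R = R and \<epsilon> = \<epsilon>]) auto
  with argmin show False by simp
qed

lemma outer_prob_le_measure: "B \<in> sets M \<Longrightarrow> A \<subseteq> B \<Longrightarrow> outer_prob M A \<le> measure M B"
  unfolding outer_prob_def by (rule cInf_lower) (auto intro: bdd_belowI[where m=0])

lemma outer_prob_nonneg: "A \<subseteq> space M \<Longrightarrow> 0 \<le> outer_prob M A"
  unfolding outer_prob_def by (rule cInf_greatest) auto

lemma little_o_seq_add:
  "little_o_seq f r \<Longrightarrow> little_o_seq g r \<Longrightarrow> little_o_seq (\<lambda>n. f n + g n) r"
  unfolding little_o_seq_def by (simp add: add_divide_distrib tendsto_add_zero)

lemma abs_SUP_le:
  fixes f :: "'a \<Rightarrow> real"
  assumes "A \<noteq> {}" "\<And>a. a \<in> A \<Longrightarrow> 0 \<le> f a" "\<And>a. a \<in> A \<Longrightarrow> f a \<le> b"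
  shows "\<bar>SUP a\<in>A. f a\<bar> \<le> b"
proof -
  obtain a where "a \<in> A" using assms(1) by blast
  moreover have "bdd_above (f ` A)" using assms(3) by (rule bdd_aboveI2)
  ultimately have "0 \<le> (SUP a\<in>A. f a)"
    using assms(2) by (intro order.trans[OF _ cSUP_upper]) auto
  moreover have "(SUP a\<in>A. f a) \<le> b" using assms by (intro cSUP_least) auto
  ultimately show ?thesis by simp
qed

lemma little_op_if_dominated:
  fixes Z W :: "nat \<Rightarrow> 'w \<Rightarrow> real"
  assumes "prob_space M"
    and W_int: "\<And>n. integrable M (W n)" and W_nonneg: "\<And>n \<omega>. 0 \<le> W n \<omega>"
    and Z_le: "eventually (\<lambda>n. \<forall>\<omega>\<in>space M. \<bar>Z n \<omega>\<bar> \<le> W n \<omega>) sequentially"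
    and W_expect: "eventually (\<lambda>n. integral\<^sup>L M (W n) \<le> s n) sequentially"
    and r_pos: "eventually (\<lambda>n. 0 < r n) sequentially"
    and s_r: "little_o_seq s r"
  shows "little_op M Z r"
  unfolding little_op_def
proof (intro allI impI)
  interpret prob_space M by fact
  fix e :: real assume "0 < e"
  have "(\<lambda>n. s n / r n / e) \<longlonglongrightarrow> 0"
    using s_r unfolding little_o_seq_def by (rule tendsto_divide_zero)
  then have lim: "(\<lambda>n. s n / (e * r n)) \<longlonglongrightarrow> 0" by (simp add: mult.commute)
  show "(\<lambda>n. outer_prob M {\<omega>\<in>space M. \<bar>Z n \<omega>\<bar> > e * r n}) \<longlonglongrightarrow> 0"
  proof (rule tendsto_sandwich[OF _ _ tendsto_const lim])
    show "eventually (\<lambda>n. 0 \<le> outer_prob M {\<omega>\<in>space M. \<bar>Z n \<omega>\<bar> > e * r n}) sequentially"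
      by (intro always_eventually allI outer_prob_nonneg) auto
    show "eventually (\<lambda>n. outer_prob M {\<omega>\<in>space M. \<bar>Z n \<omega>\<bar> > e * r n} \<le> s n / (e * r n))
        sequentially"
      using Z_le W_expect r_pos
    proof eventually_elim
      case (elim n)
      have "outer_prob M {\<omega>\<in>space M. \<bar>Z n \<omega>\<bar> > e * r n} \<le> measure M {\<omega>\<in>space M. W n \<omega> \<ge> e * r n}"
      proof (rule outer_prob_le_measure)
        show "{\<omega>\<in>space M. W n \<omega> \<ge> e * r n} \<in> sets M"
          using W_int[THEN borel_measurable_integrable] by measurable
        show "{\<omega>\<in>space M. \<bar>Z n \<omega>\<bar> > e * r n} \<subseteq> {\<omega>\<in>space M. W n \<omega> \<ge> e * r n}"
          using elim(1) by force
      qed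
      also have "\<dots> \<le> integral\<^sup>L M (W n) / (e * r n)"
        using \<open>0 < e\<close> elim(3) W_int W_nonneg
        by (intro integral_Markov_inequality_measure[where A="space M"]) auto
      also have "\<dots> \<le> s n / (e * r n)"
        using elim(2) \<open>0 < e\<close> elim(3) by (intro divide_right_mono) auto
      finally show ?case .
    qed
  qed
qed

lemma little_op_if_le_fraction_of_events:
  fixes Z :: "nat \<Rightarrow> 'w \<Rightarrow> real" and B :: "nat \<Rightarrow> nat \<Rightarrow> 'w set"
  assumes "prob_space M" and B_sets: "\<And>n i. B n i \<in> sets M"
    and Z_le: "eventually (\<lambda>n. \<forall>\<omega>\<in>space M.
                 \<bar>Z n \<omega>\<bar> \<le> (1 / real (N n)) * (\<Sum>i=1..N n. indicator (B n i) \<omega>)) sequentially"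
    and B_le: "eventually (\<lambda>n. \<forall>i\<in>{1..N n}. measure M (B n i) \<le> s n) sequentially"
    and N_pos: "eventually (\<lambda>n. 1 \<le> N n) sequentially"
    and r_pos: "eventually (\<lambda>n. 0 < r n) sequentially"
    and s_r: "little_o_seq s r"
  shows "little_op M Z r"
proof -
  interpret prob_space M by fact
  define W where "W n \<omega> = (1 / real (N n)) * (\<Sum>i=1..N n. indicator (B n i) \<omega> :: real)" for n \<omega>
  have W_int: "integrable M (W n)" for n
    unfolding W_def
    by (intro integrable_mult_right Bochner_Integration.integrable_sum integrable_real_indicator B_sets)
       (simp add: less_top[symmetric])
  have "integral\<^sup>L M (W n) \<le> s n"
    if "1 \<le> N n" "\<forall>i\<in>{1..N n}. measure M (B n i) \<le> s n" for n
  proof -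
    have "integral\<^sup>L M (W n) = (1 / real (N n)) * (\<Sum>i=1..N n. measure M (B n i))"
      unfolding W_def using B_sets
      by (subst integral_mult_right_zero, subst Bochner_Integration.integral_sum)
         (auto simp: less_top[symmetric] intro!: integrable_real_indicator)
    also have "\<dots> \<le> (1 / real (N n)) * (\<Sum>i=1..N n. s n)"
      using that(2) by (intro mult_left_mono sum_mono) auto
    also have "\<dots> = s n" using that(1) by simp
    finally show ?thesis .
  qed
  with N_pos B_le have "eventually (\<lambda>n. integral\<^sup>L M (W n) \<le> s n) sequentially"
    by (auto elim: eventually_elim2)
  moreover have "0 \<le> W n \<omega>" for n \<omega>
    unfolding W_def by (intro mult_nonneg_nonneg sum_nonneg) auto
  ultimately show ?thesis
    using \<open>prob_space M\<close> W_int Z_le r_pos s_r unfolding W_def[symmetric]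
    by (intro little_op_if_dominated[where W = W and s = s]) auto
qed

lemma sup_misclassification_rate_little_op:
  fixes M :: "'w measure" and N T :: "nat \<Rightarrow> nat" and K0 :: nat
    and x :: "nat \<Rightarrow> nat \<Rightarrow> nat \<Rightarrow> 'w \<Rightarrow> real^'p"
    and eps :: "nat \<Rightarrow> nat \<Rightarrow> nat \<Rightarrow> 'w \<Rightarrow> real"
    and k0 :: "nat \<Rightarrow> nat \<Rightarrow> nat" and theta0 :: "nat \<Rightarrow> real^'p" and Theta :: "(real^'p) set"
    and khat :: "nat \<Rightarrow> (nat \<Rightarrow> real^'p) \<Rightarrow> nat \<Rightarrow> 'w \<Rightarrow> nat"
    and r :: "nat \<Rightarrow> real" and c Mb \<eta> :: real
  assumes "prob_space M"
    and N_lim: "filterlim N at_top sequentially" and T_lim: "filterlim T at_top sequentially"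
    and x_meas: "\<And>n i t. x n i t \<in> borel_measurable M"
    and eps_meas: "\<And>n i t. eps n i t \<in> borel_measurable M"
    and khat_argmin: "\<And>n theta i \<omega>. khat n theta i \<omega> \<in> {1..K0} \<and>
         (\<forall>k\<in>{1..K0}. Qcrit x eps theta0 k0 T n theta i (khat n theta i \<omega>) \<omega>
                       \<le> Qcrit x eps theta0 k0 T n theta i k \<omega>)"
    and k0_range: "\<And>n i. i \<in> {1..N n} \<Longrightarrow> k0 n i \<in> {1..K0}"
    and Theta: "bounded Theta" "\<forall>k\<in>{1..K0}. theta0 k \<in> Theta"
    and sep: "\<forall>k\<in>{1..K0}. \<forall>k'\<in>{1..K0}. k \<noteq> k' \<longrightarrow> c < norm (theta0 k - theta0 k')"
    and eig: "eventually (\<lambda>n. \<forall>\<omega>\<in>space M. \<forall>i\<in>{1..N n}.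
                c \<le> min_eig (sample_gram (\<lambda>t. x n i t \<omega>) (T n))) sequentially"
    and moments: "little_o_seq (\<lambda>n. SUP i\<in>{1..N n}. measure M {\<omega>\<in>space M.
                 (1 / real (T n)) * (\<Sum>t=1..T n. (norm (x n i t \<omega>))\<^sup>2) \<ge> Mb}) r"
    and scores: "\<And>e. 0 < e \<Longrightarrow> little_o_seq (\<lambda>n. SUP i\<in>{1..N n}. measure M {\<omega>\<in>space M.
                 norm ((1 / real (T n)) *\<^sub>R (\<Sum>t=1..T n. eps n i t \<omega> *\<^sub>R x n i t \<omega>)) \<ge> e}) r"
    and r_pos: "eventually (\<lambda>n. 0 < r n) sequentially"
    and c: "0 < c"
    and \<eta>: "0 < \<eta>" "\<eta> \<le> c\<^sup>2 / 4" "\<eta> * Mb \<le> c ^ 3 / 8"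
  shows "little_op M
           (\<lambda>n \<omega>. SUP theta\<in>{theta. \<forall>k\<in>{1..K0}. theta k \<in> Theta \<and> (norm (theta k - theta0 k))\<^sup>2 < \<eta>}.
              (1 / real (N n)) * (\<Sum>i=1..N n. if khat n theta i \<omega> \<noteq> k0 n i then 1 else 0)) r"
proof -
  interpret prob_space M by fact
  obtain R where R: "0 < R" "\<And>v. v \<in> Theta \<Longrightarrow> norm v \<le> R"
    using Theta(1) by (auto simp: bounded_pos)
  define e0 where "e0 = c ^ 3 / (32 * R)"
  have e0: "0 < e0" "4 * R * e0 \<le> c ^ 3 / 8" using R(1) c by (simp_all add: e0_def)
  define Bx where "Bx n i = {\<omega>\<in>space M. (1 / real (T n)) * (\<Sum>t=1..T n. (norm (x n i t \<omega>))\<^sup>2) \<ge> Mb}"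
    for n i
  define Be where "Be n i = {\<omega>\<in>space M.
                 norm ((1 / real (T n)) *\<^sub>R (\<Sum>t=1..T n. eps n i t \<omega> *\<^sub>R x n i t \<omega>)) \<ge> e0}" for n i
  have Bx_sets: "Bx n i \<in> sets M" and Be_sets: "Be n i \<in> sets M" for n i
    unfolding Bx_def Be_def using x_meas eps_meas by measurable
  then have B_sets: "Bx n i \<union> Be n i \<in> sets M" for n i by blast
  have T_pos: "eventually (\<lambda>n. 1 \<le> T n) sequentially" using T_lim by (simp add: filterlim_at_top)
  define ThS where "ThS = {theta. \<forall>k\<in>{1..K0}. theta k \<in> Theta \<and> (norm (theta k - theta0 k))\<^sup>2 < \<eta>}"
  have theta0_ThS: "theta0 \<in> ThS" using Theta(2) \<eta>(1) by (simp add: ThS_def)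
  have Z_le: "eventually (\<lambda>n. \<forall>\<omega>\<in>space M.
      \<bar>SUP \<theta>\<in>ThS. (1 / real (N n)) * (\<Sum>i=1..N n. if khat n \<theta> i \<omega> \<noteq> k0 n i then 1 else 0)\<bar>
        \<le> (1 / real (N n)) * (\<Sum>i=1..N n. indicator (Bx n i \<union> Be n i) \<omega>)) sequentially"
    using eig T_pos
  proof eventually_elim
    case (elim n)
    show ?case
    proof (intro ballI abs_SUP_le)
      fix \<omega> \<theta> assume \<omega>: "\<omega> \<in> space M" and \<theta>: "\<theta> \<in> ThS"
      have "khat n \<theta> i \<omega> = k0 n i" if "i \<in> {1..N n}" "\<omega> \<notin> Bx n i \<union> Be n i" for i
        using khat_argmin[of n \<theta> i \<omega>] k0_range[OF that(1)] that elim \<omega> \<theta> sep c \<eta> e0(2) R(2)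
        unfolding Qcrit_def ymod_def
        by (intro least_squares_group_eq_true_group[where K = "{1..K0}" and T = "T n" and x = "\<lambda>t. x n i t \<omega>"
            and e = "\<lambda>t. eps n i t \<omega>" and \<beta> = theta0 and \<theta> = \<theta> and c = c and \<eta> = \<eta>
            and Mb = Mb and R = R and \<epsilon> = e0]) (auto simp: ThS_def Bx_def Be_def)
      then show "(1 / real (N n)) * (\<Sum>i=1..N n. if khat n \<theta> i \<omega> \<noteq> k0 n i then 1 else 0)
          \<le> (1 / real (N n)) * (\<Sum>i=1..N n. indicator (Bx n i \<union> Be n i) \<omega>)"
        by (intro mult_left_mono sum_mono) (auto simp: indicator_def)
    qed (use theta0_ThS in \<open>auto intro!: sum_nonneg divide_nonneg_nonneg\<close>)
  qed
  have B_le: "measure M (Bx n i \<union> Be n i)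
      \<le> (SUP i\<in>{1..N n}. measure M (Bx n i)) + (SUP i\<in>{1..N n}. measure M (Be n i))"
    if "i \<in> {1..N n}" for n i
    using that Bx_sets Be_sets
    by (intro order.trans[OF measure_subadditive add_mono] cSUP_upper) auto
  show ?thesis
    unfolding ThS_def[symmetric]
  proof (rule little_op_if_le_fraction_of_events[OF \<open>prob_space M\<close> B_sets Z_le])
    show "little_o_seq (\<lambda>n. (SUP i\<in>{1..N n}. measure M (Bx n i)) + (SUP i\<in>{1..N n}. measure M (Be n i))) r"
      using little_o_seq_add[OF moments scores[OF e0(1)]] by (simp add: Bx_def Be_def)
  qed (use B_le r_pos N_lim in \<open>auto simp: filterlim_at_top\<close>)
qed

theorem lemmaA3:
  fixes M :: "'w measure"
    and N T :: "nat \<Rightarrow> nat"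
    and K0 :: nat
    and x :: "nat \<Rightarrow> nat \<Rightarrow> nat \<Rightarrow> 'w \<Rightarrow> real^'p"
    and eps :: "nat \<Rightarrow> nat \<Rightarrow> nat \<Rightarrow> 'w \<Rightarrow> real"
    and k0 :: "nat \<Rightarrow> nat \<Rightarrow> nat"
    and theta0 :: "nat \<Rightarrow> real^'p"
    and Theta :: "(real^'p) set"
    and tau :: "nat \<Rightarrow> nat \<Rightarrow> real"
    and alpha :: "nat \<Rightarrow> real"
    and khat :: "nat \<Rightarrow> (nat \<Rightarrow> real^'p) \<Rightarrow> nat \<Rightarrow> 'w \<Rightarrow> nat"
  assumes P: "prob_space M"
    and NT_lim: "filterlim N at_top sequentially" "filterlim T at_top sequentially"
    \<comment> \<open>measurability of the data\<close>
    and x_meas: "\<And>n i t. x n i t \<in> borel_measurable M"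
    and eps_meas: "\<And>n i t. eps n i t \<in> borel_measurable M"
    \<comment> \<open>khat is an argmin selection (any tie-breaking)\<close>
    and khat_argmin: "\<And>n theta i \<omega>. khat n theta i \<omega> \<in> {1..K0} \<and>
         (\<forall>k\<in>{1..K0}. Qcrit x eps theta0 k0 T n theta i (khat n theta i \<omega>) \<omega>
                       \<le> Qcrit x eps theta0 k0 T n theta i k \<omega>)"
    \<comment> \<open>Assumption 1\<close>
    and k0_range: "\<And>n i. i \<in> {1..N n} \<Longrightarrow> k0 n i \<in> {1..K0}"
    and A1_size: "\<And>n k. k \<in> {1..K0} \<Longrightarrow>
         real (card {i\<in>{1..N n}. k0 n i = k}) = tau n k * real (N n) powr alpha k"
    and A1_tau: "\<exists>a b. 0 < a \<and> (\<forall>n. \<forall>k\<in>{1..K0}. a \<le> tau n k \<and> tau n k \<le> b)"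
    and A1_alpha: "\<And>k. k \<in> {1..K0} \<Longrightarrow> 0 \<le> alpha k \<and> alpha k \<le> 1"
    and A1_nonempty: "\<And>n k. k \<in> {1..K0} \<Longrightarrow> card {i\<in>{1..N n}. k0 n i = k} \<ge> 1"
    and A1_order: "\<exists>m\<in>{1..K0-1}. (\<forall>k\<in>{1..m}. alpha k = 1) \<and> alpha (m+1) < 1 \<and>
                      (\<forall>k\<in>{m+1..K0}. \<forall>k'\<in>{m+1..K0}. k \<le> k' \<longrightarrow> alpha k' \<le> alpha k)"
    \<comment> \<open>Assumption 2\<close>
    and A2: "\<exists>Mb c. Mb > 0 \<and> c > 0 \<and>
       \<comment> \<open>(a)\<close>
       compact Theta \<and> (\<forall>k\<in>{1..K0}. theta0 k \<in> Theta) \<and>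
       \<comment> \<open>(b)\<close>
       (\<forall>n. \<forall>i\<in>{1..N n}. \<forall>t\<in>{1..T n}.
          integrable M (\<lambda>\<omega>. norm (x n i t \<omega>) ^ 4) \<and>
          integral\<^sup>L M (\<lambda>\<omega>. norm (x n i t \<omega>) ^ 4) \<le> Mb) \<and>
       \<comment> \<open>(c)\<close>
       (\<forall>n. \<forall>i\<in>{1..N n}. \<forall>t\<in>{1..T n}.
          integrable M (eps n i t) \<and> integral\<^sup>L M (eps n i t) = 0 \<and>
          integrable M (\<lambda>\<omega>. eps n i t \<omega> ^ 4) \<and>
          integral\<^sup>L M (\<lambda>\<omega>. eps n i t \<omega> ^ 4) \<le> Mb) \<and>
       \<comment> \<open>(d)\<close>
       bounded_in_prob M (\<lambda>n \<omega>. (1 / sqrt (real (N n) * real (T n))) *\<^sub>R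
          (\<Sum>i=1..N n. \<Sum>t=1..T n. eps n i t \<omega> *\<^sub>R x n i t \<omega>)) \<and>
       \<comment> \<open>(e)\<close>
       (\<exists>rhohat rho. rho > 0 \<and> (\<forall>n. rhohat n \<in> borel_measurable M) \<and>
          conv_in_prob M rhohat rho \<and>
          eventually (\<lambda>n. \<forall>\<omega>\<in>space M. \<forall>k\<in>{1..K0}. \<forall>\<gamma>. (\<forall>i\<in>{1..N n}. \<gamma> i \<in> {1..K0}) \<longrightarrow>
             Max ((\<lambda>kt. rhoNT x k0 N T n \<gamma> k kt \<omega>) ` {1..K0}) \<ge> rhohat n \<omega>) sequentially) \<and>
       \<comment> \<open>(f)\<close>
       (\<exists>chat L. chat \<longlonglongrightarrow> L \<and> L > c \<and>
          eventually (\<lambda>n. \<forall>\<omega>\<in>space M. \<forall>i\<in>{1..N n}.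
             min_eig ((1 / real (T n)) *\<^sub>R (\<Sum>t=1..T n. outer (x n i t \<omega>))) \<ge> chat n) sequentially) \<and>
       \<comment> \<open>(g)\<close>
       (alpha K0 \<ge> 1/2 \<longrightarrow> (\<exists>\<nu>>0. (\<lambda>n. real (N n) / real (T n) powr \<nu>) \<longlonglongrightarrow> 0)) \<and>
       (alpha K0 < 1/2 \<longrightarrow> (\<lambda>n. real (N n) powr (1 - 2 * alpha K0) / real (T n)) \<longlonglongrightarrow> 0) \<and>
       \<comment> \<open>(h)\<close>
       (\<forall>k\<in>{1..K0}. \<forall>k'\<in>{1..K0}. k \<noteq> k' \<longrightarrow> norm (theta0 k - theta0 k') > c) \<and>
       \<comment> \<open>(i)\<close>
       (\<forall>\<delta>>0. little_o_seq
          (\<lambda>n. SUP i\<in>{1..N n}. measure M {\<omega>\<in>space M.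
                 (1 / real (T n)) * (\<Sum>t=1..T n. (norm (x n i t \<omega>))\<^sup>2) \<ge> Mb})
          (\<lambda>n. real (T n) powr (- \<delta>))) \<and>
       \<comment> \<open>(j)\<close>
       (\<forall>e>0. \<forall>\<delta>>0. little_o_seq
          (\<lambda>n. SUP i\<in>{1..N n}. measure M {\<omega>\<in>space M.
                 norm ((1 / real (T n)) *\<^sub>R (\<Sum>t=1..T n. eps n i t \<omega> *\<^sub>R x n i t \<omega>)) \<ge> e})
          (\<lambda>n. real (T n) powr (- \<delta>))) \<and>
       \<comment> \<open>(k)\<close>
       (\<exists>\<sigma>2>0. conv_in_prob M
          (\<lambda>n \<omega>. (1 / (real (N n) * real (T n))) * (\<Sum>i=1..N n. \<Sum>t=1..T n. (eps n i t \<omega>)\<^sup>2)) \<sigma>2)"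
  shows "\<exists>\<eta>0>0. \<forall>\<eta>. 0 < \<eta> \<and> \<eta> < \<eta>0 \<longrightarrow> (\<forall>\<delta>>0.
           little_op M
             (\<lambda>n \<omega>. SUP theta\<in>{theta. (\<forall>k\<in>{1..K0}. theta k \<in> Theta \<and> (norm (theta k - theta0 k))\<^sup>2 < \<eta>)}.
                (1 / real (N n)) * (\<Sum>i=1..N n. if khat n theta i \<omega> \<noteq> k0 n i then 1 else 0))
             (\<lambda>n. real (T n) powr (- \<delta>)))"
proof -
  from A2 obtain Mb c chat L where Mb: "0 < Mb" and c: "0 < c"
    and Theta: "compact Theta" "\<forall>k\<in>{1..K0}. theta0 k \<in> Theta"
    and chat: "chat \<longlonglongrightarrow> L" "c < L"
    and chat_le: "eventually (\<lambda>n. \<forall>\<omega>\<in>space M. \<forall>i\<in>{1..N n}.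
             min_eig ((1 / real (T n)) *\<^sub>R (\<Sum>t=1..T n. outer (x n i t \<omega>))) \<ge> chat n) sequentially"
    and sep: "\<forall>k\<in>{1..K0}. \<forall>k'\<in>{1..K0}. k \<noteq> k' \<longrightarrow> norm (theta0 k - theta0 k') > c"
    and moments: "\<forall>\<delta>>0. little_o_seq
          (\<lambda>n. SUP i\<in>{1..N n}. measure M {\<omega>\<in>space M.
                 (1 / real (T n)) * (\<Sum>t=1..T n. (norm (x n i t \<omega>))\<^sup>2) \<ge> Mb})
          (\<lambda>n. real (T n) powr (- \<delta>))"
    and scores: "\<forall>e>0. \<forall>\<delta>>0. little_o_seq
          (\<lambda>n. SUP i\<in>{1..N n}. measure M {\<omega>\<in>space M.
                 norm ((1 / real (T n)) *\<^sub>R (\<Sum>t=1..T n. eps n i t \<omega> *\<^sub>R x n i t \<omega>)) \<ge> e})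
          (\<lambda>n. real (T n) powr (- \<delta>))"
    by (elim exE conjE) (rule that; assumption)
  have eig: "eventually (\<lambda>n. \<forall>\<omega>\<in>space M. \<forall>i\<in>{1..N n}.
      c \<le> min_eig (sample_gram (\<lambda>t. x n i t \<omega>) (T n))) sequentially"
    using chat_le order_tendstoD(1)[OF chat] by eventually_elim force
  have T_ge_1: "eventually (\<lambda>n. 1 \<le> T n) sequentially" using NT_lim(2) by (simp add: filterlim_at_top)
  show ?thesis (is "\<exists>\<eta>0>0. \<forall>\<eta>. _ \<longrightarrow> (\<forall>\<delta>>0. little_op M (?Z \<eta>) (?r \<delta>))")
  proof (intro exI[of _ "min (c\<^sup>2 / 4) (c ^ 3 / (8 * Mb))"] conjI allI impI)
    show "0 < min (c\<^sup>2 / 4) (c ^ 3 / (8 * Mb))" using c Mb by simp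
    fix \<eta> \<delta> :: real
    assume \<eta>: "0 < \<eta> \<and> \<eta> < min (c\<^sup>2 / 4) (c ^ 3 / (8 * Mb))" and "0 < \<delta>"
    show "little_op M (?Z \<eta>) (?r \<delta>)"
    proof (rule sup_misclassification_rate_little_op[OF P NT_lim x_meas eps_meas khat_argmin k0_range
          compact_imp_bounded[OF Theta(1)] Theta(2) sep eig])
      show "eventually (\<lambda>n. 0 < real (T n) powr (- \<delta>)) sequentially"
        using T_ge_1 by eventually_elim simp
      show "\<eta> * Mb \<le> c ^ 3 / 8" using \<eta> Mb by (simp add: field_simps)
    qed (use \<eta> c Mb moments scores \<open>0 < \<delta>\<close> in auto)
  qed
qed

end
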